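(* Let $\mathbf a$ be a mask whose linear scheme $\widetilde S$ is convergent, with refinable function $\varphi$, and let $p\in[1,\infty)$ and $\ell\in\mathbb Z^s$. Then the characteristic Markov chain $(X_n^{\mathbf a})$ with deterministic initial condition $X_0^{\mathbf a}=\ell$ converges in $L^p(\Omega,\mathbb P_\ell;\mathbb R^s)$ if and only if the scheme is interpolatory, i.e. there is $k\in\mathbb Z^s$ with $\varphi(j)=\delta_{kj}$ for all $j\in\mathbb Z^s$. In this case the $L^p$-limit is a constant lattice point.
   Context: Mask: finitely supported nonnegative $(a_i)_{i\in\mathbb Z^s}$ with $\sum_ja_{i-2j}=1$ for all $i$. Linear scheme: $\widetilde Sx_i=\sum_ja_{i-2j}x_j$ on $\ell^\infty(\mathbb Z^s,\mathbb R)$; it is convergent if for every bounded $x$ there is a continuous $\widetilde S^\infty x$ with $\sup_j|\widetilde S^\infty x(j/2^n)-(\widetilde S^nx)_j|\to0$. The refinable function is $\varphi=\widetilde S^\infty\delta_0$ (where $\delta_0$ is the sequence equal to $1$ at $0$ and $0$ elsewhere); it is continuous and satisfies $\varphi(t)=\sum_ja_j\varphi(2t-j)$ and $\sum_j\varphi(t-j)=1$. Define $a^{(0)}_i=\delta_{i,0}$, $a^{(n+1)}_i=\sum_ja_{i-2j}a^{(n)}_j$. Characteristic Markov chain: Markov chain $(X_n^{\mathbf a})$ on $\mathbb Z^s$ with $\mathbb P(X_{n+1}=j\mid X_n=i)=a_{i-2j}$ (so $\mathbb P(X_{n+m}=j\mid X_n=i)=a^{(m)}_{i-2^mj}$), realized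 canonically on $\Omega=(\mathbb Z^s)^{\mathbb N_0}$; $\mathbb P_\ell$ is its law started at $\ell$. *)

theory Defs
  imports "HOL-Probability.Probability"
begin

text \<open>Lattice points of Z^s are modelled as int^'s for a finite index type 's;
  points of R^s as real^'s.\<close>

definition lat_pt :: "int^'s \<Rightarrow> real^'s" where
  "lat_pt j = (\<chi> i. real_of_int (j $ i))"

definition is_mask :: "(int^'s \<Rightarrow> real) \<Rightarrow> bool" where
  "is_mask a \<longleftrightarrow> finite {i. a i \<noteq> 0} \<and> (\<forall>i. a i \<ge> 0)
     \<and> (\<forall>i. (\<Sum>\<^sub>\<infinity>j. a (i - 2 * j)) = 1)"

definition lin_scheme :: "(int^'s \<Rightarrow> real) \<Rightarrow> (int^'s \<Rightarrow> real) \<Rightarrow> (int^'s \<Rightarrow> real)" where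
  "lin_scheme a x = (\<lambda>i. \<Sum>\<^sub>\<infinity>j. a (i - 2 * j) * x j)"

definition scheme_limit :: "(int^'s \<Rightarrow> real) \<Rightarrow> (int^'s \<Rightarrow> real) \<Rightarrow> (real^'s \<Rightarrow> real) \<Rightarrow> bool" where
  "scheme_limit a x f \<longleftrightarrow> continuous_on UNIV f \<and>
     (\<forall>\<epsilon>>0. \<forall>\<^sub>F n in sequentially. \<forall>j.
        \<bar>f ((1 / 2 ^ n) *\<^sub>R lat_pt j) - (lin_scheme a ^^ n) x j\<bar> \<le> \<epsilon>)"

definition scheme_convergent :: "(int^'s \<Rightarrow> real) \<Rightarrow> bool" where
  "scheme_convergent a \<longleftrightarrow>
     (\<forall>x. bounded (range x) \<longrightarrow> (\<exists>f. scheme_limit a x f))"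

definition delta0 :: "int^'s \<Rightarrow> real" where
  "delta0 = (\<lambda>j. if j = 0 then 1 else 0)"

definition refinable_fun :: "(int^'s \<Rightarrow> real) \<Rightarrow> (real^'s \<Rightarrow> real) \<Rightarrow> bool" where
  "refinable_fun a \<phi> \<longleftrightarrow> scheme_limit a delta0 \<phi>"

definition interpolatory :: "(real^'s \<Rightarrow> real) \<Rightarrow> bool" where
  "interpolatory \<phi> \<longleftrightarrow> (\<exists>k::int^'s. \<forall>j. \<phi> (lat_pt j) = (if k = j then 1 else 0))"

text \<open>Canonical path space Omega = (Z^s)^N with the product sigma algebra; X_n(\<omega>) = \<omega> n.
  M is the law P_l of the characteristic Markov chain started at l iff it is a
  probability measure on this space with the right finite-dimensional distributions
  (these determine the measure uniquely).\<close>
definition path_space :: "(nat \<Rightarrow> int^'s) measure" where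
  "path_space = PiM UNIV (\<lambda>_. count_space UNIV)"

definition char_chain_law :: "(int^'s \<Rightarrow> real) \<Rightarrow> int^'s \<Rightarrow> (nat \<Rightarrow> int^'s) measure \<Rightarrow> bool" where
  "char_chain_law a l M \<longleftrightarrow> prob_space M \<and> sets M = sets path_space \<and>
     (\<forall>n (i::nat \<Rightarrow> int^'s). measure M {\<omega> \<in> space M. \<forall>k\<le>n. \<omega> k = i k}
        = (if i 0 = l then 1 else 0) * (\<Prod>k<n. a (i k - 2 * i (Suc k))))"

definition Lp_limit :: "(nat \<Rightarrow> int^'s) measure \<Rightarrow> real \<Rightarrow> ((nat \<Rightarrow> int^'s) \<Rightarrow> real^'s) \<Rightarrow> bool" where
  "Lp_limit M p Y \<longleftrightarrow> Y \<in> borel_measurable M \<and>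
     (\<integral>\<^sup>+\<omega>. ennreal (norm (Y \<omega>) powr p) \<partial>M) < \<infinity> \<and>
     (\<forall>n. (\<integral>\<^sup>+\<omega>. ennreal (norm (lat_pt (\<omega> n)) powr p) \<partial>M) < \<infinity>) \<and>
     ((\<lambda>n. \<integral>\<^sup>+\<omega>. ennreal (norm (lat_pt (\<omega> n) - Y \<omega>) powr p) \<partial>M) \<longlonglongrightarrow> 0)"

definition Lp_convergent :: "(nat \<Rightarrow> int^'s) measure \<Rightarrow> real \<Rightarrow> bool" where
  "Lp_convergent M p \<longleftrightarrow> (\<exists>Y. Lp_limit M p Y)"

end

theory Submission
  imports Defs
begin

(* Write q n j = P(X_n = j) for the characteristic chain started at l and
   S for the linear scheme.  The chain is dual to the scheme:
     (S^n x)_l = sum_j q n j * x_j,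
   and, combined with the shift invariance of S, this gives q n j = (S^n delta_0)_(l - 2^n j),
   so by the convergence of the scheme to phi the laws of X_n converge pointwise to the
   limit distribution mu j = phi(-j).  Everything lives in a finite box of lattice points.

   If X_n converges in L^p to some Y, then P(X_n ~= X_(n+1)) -> 0 (Markov's inequality),
   while P(X_n = X_(n+1)) = sum_j q n j * a(-j).  Hence sum_j mu j * a(-j) = 1, so mu is
   carried by the "absorbing" points j with a(-j) = 1, of which there is at most one.
   Thus mu is a point mass, i.e. phi is interpolatory, and Y is a.s. that lattice point.
   Conversely, if mu is a point mass at c, then E|X_n - c|^p -> 0 since the sum is finite.
   Only the convergence of the scheme for delta_0 (i.e. the refinable function) is used. *)

subsection \<open>Lattice points\<close>

lemma lat_pt_add: "lat_pt (x + y) = lat_pt x + lat_pt y"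
  by (simp add: lat_pt_def vec_eq_iff)

lemma lat_pt_uminus: "lat_pt (- x) = - lat_pt x"
  by (simp add: lat_pt_def vec_eq_iff)

lemma lat_pt_smult: "lat_pt (c *s x) = real_of_int c *\<^sub>R lat_pt x"
  by (simp add: lat_pt_def vec_eq_iff)

lemma lat_pt_dist_ge_1:
  assumes "i \<noteq> j"
  shows "1 \<le> norm (lat_pt i - lat_pt j)"
proof -
  obtain t where t: "i $ t \<noteq> j $ t" using assms by (auto simp: vec_eq_iff)
  have "1 \<le> \<bar>real_of_int (i $ t) - real_of_int (j $ t)\<bar>" using t by linarith
  also have "\<dots> = \<bar>(lat_pt i - lat_pt j) $ t\<bar>" by (simp add: lat_pt_def)
  also have "\<dots> \<le> norm (lat_pt i - lat_pt j)" by (rule component_le_norm_cart)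
  finally show ?thesis .
qed

lemma rescaled_lattice_tendsto:
  fixes c d :: "int^'s"
  shows "(\<lambda>n. (1 / 2^n) *\<^sub>R lat_pt ((2^n) *s c + d)) \<longlonglongrightarrow> lat_pt c"
proof -
  have eq: "(1 / 2^n) *\<^sub>R lat_pt ((2^n) *s c + d) = lat_pt c + (1 / 2^n) *\<^sub>R lat_pt d" for n
    by (simp add: lat_pt_add lat_pt_smult scaleR_add_right)
  have "(\<lambda>n. (1 / 2^n :: real)) \<longlonglongrightarrow> 0"
    using LIMSEQ_divide_realpow_zero[of 2 1] by simp
  then have "(\<lambda>n. lat_pt c + (1 / 2^n) *\<^sub>R lat_pt d) \<longlonglongrightarrow> lat_pt c + 0 *\<^sub>R lat_pt d"
    by (intro tendsto_intros)
  then show ?thesis unfolding eq by simp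
qed

subsection \<open>Generic measure theory\<close>

lemma markov_inequality_powr:
  fixes f :: "'a \<Rightarrow> 'b::real_normed_vector"
  assumes f[measurable]: "f \<in> borel_measurable M" and e: "0 < e" and p: "0 \<le> p"
  shows "emeasure M {x\<in>space M. e \<le> norm (f x)}
           \<le> ennreal ((1/e) powr p) * (\<integral>\<^sup>+x. ennreal (norm (f x) powr p) \<partial>M)"
proof -
  let ?u = "\<lambda>x. ennreal ((1/e) powr p) * ennreal (norm (f x) powr p)"
  have "{x\<in>space M. e \<le> norm (f x)} \<subseteq> {x\<in>space M. 1 \<le> ?u x}"
  proof safe
    fix x assume "e \<le> norm (f x)"
    then have "1 \<le> (1/e) * norm (f x)" using e by (simp add: field_simps)
    then have "1 \<le> ((1/e) * norm (f x)) powr p" using p by (intro ge_one_powr_ge_zero) auto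
    also have "\<dots> = (1/e) powr p * norm (f x) powr p" by (rule powr_mult)
    finally show "1 \<le> ?u x" by (simp add: ennreal_mult''[symmetric] flip: ennreal_1)
  qed
  then have "emeasure M {x\<in>space M. e \<le> norm (f x)} \<le> emeasure M {x\<in>space M. 1 \<le> ?u x}"
    by (rule emeasure_mono) measurable
  also have "\<dots> \<le> ennreal ((1/e) powr p) * (\<integral>\<^sup>+x. ennreal (norm (f x) powr p) * indicator (space M) x \<partial>M)"
    by (rule nn_integral_Markov_inequality) auto
  also have "(\<integral>\<^sup>+x. ennreal (norm (f x) powr p) * indicator (space M) x \<partial>M)
             = (\<integral>\<^sup>+x. ennreal (norm (f x) powr p) \<partial>M)"
    by (rule nn_integral_cong) simp
  finally show ?thesis .
qed

lemma Lp_tendsto_imp_in_measure: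
  fixes f :: "nat \<Rightarrow> 'a \<Rightarrow> 'b::real_normed_vector"
  assumes f: "\<And>n. f n \<in> borel_measurable M" and e: "0 < e" and p: "0 \<le> p"
    and lim: "(\<lambda>n. \<integral>\<^sup>+x. ennreal (norm (f n x) powr p) \<partial>M) \<longlonglongrightarrow> 0"
  shows "(\<lambda>n. emeasure M {x\<in>space M. e \<le> norm (f n x)}) \<longlonglongrightarrow> 0"
proof (rule tendsto_sandwich[OF _ _ tendsto_const])
  let ?c = "ennreal ((1/e) powr p)"
  show "(\<lambda>n. ?c * (\<integral>\<^sup>+x. ennreal (norm (f n x) powr p) \<partial>M)) \<longlonglongrightarrow> 0"
    using ennreal_tendsto_cmult[OF _ lim, of ?c] by simp
  show "\<forall>\<^sub>F n in sequentially. emeasure M {x\<in>space M. e \<le> norm (f n x)}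
          \<le> ?c * (\<integral>\<^sup>+x. ennreal (norm (f n x) powr p) \<partial>M)"
    using markov_inequality_powr[OF f e p] by simp
qed simp

lemma AE_eq_if_far_null:
  fixes f :: "'a \<Rightarrow> 'b::{real_normed_vector, second_countable_topology}"
  assumes f[measurable]: "f \<in> borel_measurable M"
    and far: "\<And>e. 0 < e \<Longrightarrow> emeasure M {x\<in>space M. e \<le> norm (f x - c)} = 0"
  shows "AE x in M. f x = c"
proof (rule AE_I')
  show "(\<Union>m. {x\<in>space M. 1 / Suc m \<le> norm (f x - c)}) \<in> null_sets M"
  proof (rule null_sets_UN)
    fix m :: nat
    have "{x\<in>space M. 1 / Suc m \<le> norm (f x - c)} \<in> sets M" by measurable
    then show "{x\<in>space M. 1 / Suc m \<le> norm (f x - c)} \<in> null_sets M"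
      using far[of "1 / Suc m"] by (simp add: null_sets_def)
  qed
  show "{x\<in>space M. f x \<noteq> c} \<subseteq> (\<Union>m. {x\<in>space M. 1 / Suc m \<le> norm (f x - c)})"
  proof safe
    fix x assume "x \<in> space M" "f x \<noteq> c"
    then obtain m where "m > 0" "inverse (real m) < norm (f x - c)"
      using ex_inverse_of_nat_less[of "norm (f x - c)"] by auto
    then have "1 / Suc (m - 1) \<le> norm (f x - c)" by (simp add: inverse_eq_divide)
    with \<open>x \<in> space M\<close> show "x \<in> (\<Union>m. {x\<in>space M. 1 / Suc m \<le> norm (f x - c)})" by blast
  qed
qed

lemma (in finite_measure) measure_UN_finite_support:
  fixes B :: "'b::countable \<Rightarrow> 'a set"
  assumes "finite G" "\<And>j. B j \<in> sets M" "disjoint_family B"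
    and "\<And>j. j \<notin> G \<Longrightarrow> measure M (B j) = 0"
  shows "measure M (\<Union>j. B j) = (\<Sum>j\<in>G. measure M (B j))"
proof -
  have eq: "(\<Union>j. B j) = (\<Union>j\<in>G. B j) \<union> (\<Union>j\<in>-G. B j)" by auto
  have "(\<Union>j\<in>-G. B j) \<in> null_sets M"
    by (rule null_sets_UN') (use assms in \<open>auto simp: emeasure_eq_measure\<close>)
  then have "measure M (\<Union>j. B j) = measure M (\<Union>j\<in>G. B j)"
    unfolding eq by (intro measure_Un_null_set) (use assms in auto)
  also have "\<dots> = (\<Sum>j\<in>G. measure M (B j))"
    by (rule finite_measure_finite_Union)
       (use assms in \<open>auto simp: disjoint_family_on_def disjoint_family_subset\<close>)
  finally show ?thesis .
qed

subsection \<open>Masks and the linear scheme\<close>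

lemma infsum_eq_sum_superset:
  assumes "finite G" "\<And>j. j \<notin> G \<Longrightarrow> f j = 0"
  shows "(\<Sum>\<^sub>\<infinity>j. f j) = sum f G"
proof -
  have "(\<Sum>\<^sub>\<infinity>j. f j) = (\<Sum>\<^sub>\<infinity>j\<in>G. f j)"
    by (rule infsum_cong_neutral) (use assms in auto)
  then show ?thesis using assms by simp
qed

lemma lin_scheme_eq_sum:
  assumes "finite G" "\<And>j. a (i - 2 * j) \<noteq> 0 \<Longrightarrow> j \<in> G"
  shows "lin_scheme a x i = (\<Sum>j\<in>G. a (i - 2 * j) * x j)"
  unfolding lin_scheme_def by (rule infsum_eq_sum_superset) (use assms in auto)

lemma lin_scheme_shift:
  fixes c :: "int^'s"
  shows "lin_scheme a (\<lambda>m. x (m + c)) i = lin_scheme a x (i + 2 * c)"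
proof -
  have bij: "bij_betw (\<lambda>j::int^'s. j + c) UNIV UNIV"
    by (rule bij_betwI[where g="\<lambda>j. j - c"]) auto
  have "lin_scheme a x (i + 2 * c) = (\<Sum>\<^sub>\<infinity>j. (\<lambda>j. a (i + 2 * c - 2 * j) * x j) (j + c))"
    unfolding lin_scheme_def by (rule infsum_reindex_bij_betw[OF bij, symmetric])
  also have "\<dots> = lin_scheme a (\<lambda>m. x (m + c)) i"
    unfolding lin_scheme_def by (simp add: algebra_simps)
  finally show ?thesis by simp
qed

lemma lin_scheme_pow_shift:
  fixes c :: "int^'s"
  shows "(lin_scheme a ^^ n) (\<lambda>m. x (m + c)) = (\<lambda>i. (lin_scheme a ^^ n) x (i + (2^n) *s c))"
proof (induction n)
  case (Suc n)
  have "i + 2 * ((2::int)^n *s c) = i + (2^Suc n) *s c" for i :: "int^'s"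
    by (simp add: vec_eq_iff)
  then show ?case by (simp add: Suc lin_scheme_shift[of a "(lin_scheme a ^^ n) x"])
qed (simp add: vec_eq_iff)

locale mask_scheme =
  fixes a :: "int^'s \<Rightarrow> real"
  assumes is_mask: "is_mask a"
begin

lemma finite_mask_support: "finite {d. a d \<noteq> 0}"
  using is_mask by (simp add: is_mask_def)

lemma nonneg: "0 \<le> a d"
  using is_mask by (simp add: is_mask_def)

lemma finite_row: "finite {j. a (i - 2 * j) \<noteq> 0}"
proof -
  have "finite ((\<lambda>j. i - 2 * j) -` {d. a d \<noteq> 0})"
    by (rule finite_vimageI[OF finite_mask_support]) (auto simp: inj_def vec_eq_iff)
  then show ?thesis by (simp add: vimage_def)
qed

lemma finite_column: "finite {j. a (j - 2 * c) \<noteq> 0}"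
proof -
  have "finite ((\<lambda>j. j - 2 * c) -` {d. a d \<noteq> 0})"
    by (rule finite_vimageI[OF finite_mask_support]) (auto simp: inj_def)
  then show ?thesis by (simp add: vimage_def)
qed

lemma row_sum: "(\<Sum>j\<in>{j. a (i - 2 * j) \<noteq> 0}. a (i - 2 * j)) = 1"
  using is_mask infsum_eq_sum_superset[OF finite_row, where f="\<lambda>j. a (i - 2 * j)"]
  by (simp add: is_mask_def)

lemma le_1: "a d \<le> 1"
proof (cases "a d = 0")
  case False
  have "a (d - 2 * 0) \<le> (\<Sum>j\<in>{j. a (d - 2 * j) \<noteq> 0}. a (d - 2 * j))"
    by (rule member_le_sum) (use False finite_row nonneg in auto)
  then show ?thesis using row_sum by simp
qed simp

lemma absorbing_row:
  assumes "a (- k) = 1" "j \<noteq> i"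
  shows "a (2 * i - k - 2 * j) = 0"
proof -
  let ?J = "{j. a (2 * i - k - 2 * j) \<noteq> 0}"
  have iJ: "i \<in> ?J" using assms by simp
  have "(\<Sum>j\<in>?J. a (2 * i - k - 2 * j)) = a (2 * i - k - 2 * i) + (\<Sum>j\<in>?J - {i}. a (2 * i - k - 2 * j))"
    by (rule sum.remove[OF finite_row iJ])
  then have "(\<Sum>j\<in>?J - {i}. a (2 * i - k - 2 * j)) = 0" using assms row_sum by simp
  then have "\<forall>j\<in>?J - {i}. a (2 * i - k - 2 * j) = 0"
    using sum_nonneg_eq_0_iff[of "?J - {i}" "\<lambda>j. a (2 * i - k - 2 * j)"] finite_row nonneg by simp
  then show ?thesis using assms(2) by blast
qed

lemma absorbing_scheme:
  assumes "a (- k) = 1"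
  shows "lin_scheme a y (2 * i - k) = y i"
proof -
  have "lin_scheme a y (2 * i - k) = (\<Sum>j\<in>{i}. a (2 * i - k - 2 * j) * y j)"
    by (rule lin_scheme_eq_sum) (use absorbing_row[OF assms] in auto)
  then show ?thesis using assms by simp
qed

lemma absorbing_scheme_pow:
  assumes "a (- k) = 1"
  shows "(lin_scheme a ^^ n) y ((2^n) *s (m - k) + k) = y m"
proof (induction n)
  case (Suc n)
  have "(2^Suc n) *s (m - k) + k = 2 * ((2^n) *s (m - k) + k) - k"
    by (simp add: vec_eq_iff algebra_simps)
  then show ?case unfolding funpow.simps comp_def by (simp only: absorbing_scheme[OF assms] Suc)
qed (simp add: vec_eq_iff)

end

locale refinable_mask = mask_scheme a for a :: "int^'s \<Rightarrow> real" +
  fixes \<phi> :: "real^'s \<Rightarrow> real"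
  assumes refinable: "refinable_fun a \<phi>"
begin

lemma scheme_tendsto_refinable:
  assumes z: "(\<lambda>n. (1 / 2^n) *\<^sub>R lat_pt (z n)) \<longlonglongrightarrow> t"
  shows "(\<lambda>n. (lin_scheme a ^^ n) delta0 (z n)) \<longlonglongrightarrow> \<phi> t"
proof -
  let ?\<phi>n = "\<lambda>n. \<phi> ((1 / 2^n) *\<^sub>R lat_pt (z n))"
  have cont: "continuous_on UNIV \<phi>"
    and unif: "\<And>\<epsilon>. \<epsilon> > 0 \<Longrightarrow> \<forall>\<^sub>F n in sequentially. \<forall>j.
                  \<bar>\<phi> ((1 / 2 ^ n) *\<^sub>R lat_pt j) - (lin_scheme a ^^ n) delta0 j\<bar> \<le> \<epsilon>"
    using refinable by (auto simp: refinable_fun_def scheme_limit_def)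
  have "?\<phi>n \<longlonglongrightarrow> \<phi> t"
    using continuous_on_tendsto_compose[OF cont z] by (simp add: o_def)
  moreover have "(\<lambda>n. ?\<phi>n n - (lin_scheme a ^^ n) delta0 (z n)) \<longlonglongrightarrow> 0"
  proof (rule tendstoI)
    fix e :: real assume "e > 0"
    then have "\<forall>\<^sub>F n in sequentially. \<forall>j. \<bar>\<phi> ((1 / 2 ^ n) *\<^sub>R lat_pt j) - (lin_scheme a ^^ n) delta0 j\<bar> \<le> e / 2"
      by (intro unif) simp
    then show "\<forall>\<^sub>F n in sequentially. dist (?\<phi>n n - (lin_scheme a ^^ n) delta0 (z n)) 0 < e"
    proof eventually_elim
      case (elim n)
      then have "\<bar>?\<phi>n n - (lin_scheme a ^^ n) delta0 (z n)\<bar> \<le> e / 2" by blast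
      then show ?case using \<open>e > 0\<close> by (simp add: dist_real_def)
    qed
  qed
  ultimately have "(\<lambda>n. ?\<phi>n n - (?\<phi>n n - (lin_scheme a ^^ n) delta0 (z n))) \<longlonglongrightarrow> \<phi> t - 0"
    by (intro tendsto_diff)
  then show ?thesis by simp
qed

text \<open>There is at most one absorbing point \<open>k\<close>, i.e.\ with \<open>a(-k) = 1\<close>: by
  \<open>absorbing_scheme_pow\<close>, two of them would force \<open>\<phi>(-k\<^sub>1)\<close> to be both \<open>1\<close> and \<open>0\<close>.\<close>
lemma absorbing_unique:
  assumes k1: "a (- k1) = 1" and k2: "a (- k2) = 1"
  shows "k1 = k2"
proof (rule ccontr)
  assume ne: "k1 \<noteq> k2"
  have lim: "(\<lambda>n. (lin_scheme a ^^ n) delta0 ((2^n) *s (- k1) + k)) \<longlonglongrightarrow> \<phi> (lat_pt (- k1))" for k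
    by (rule scheme_tendsto_refinable[OF rescaled_lattice_tendsto])
  have "(lin_scheme a ^^ n) delta0 ((2^n) *s (- k1) + k1) = 1" for n
    using absorbing_scheme_pow[OF k1, of n delta0 0] by (simp add: delta0_def)
  then have "(\<lambda>n. 1::real) \<longlonglongrightarrow> \<phi> (lat_pt (- k1))" using lim[of k1] by simp
  then have "\<phi> (lat_pt (- k1)) = 1" using LIMSEQ_unique[OF tendsto_const] by metis
  have "(lin_scheme a ^^ n) delta0 ((2^n) *s (- k1) + k2) = 0" for n
    using absorbing_scheme_pow[OF k2, of n delta0 "k2 - k1"] ne by (simp add: delta0_def)
  then have "(\<lambda>n. 0::real) \<longlonglongrightarrow> \<phi> (lat_pt (- k1))" using lim[of k2] by simp
  then have "\<phi> (lat_pt (- k1)) = 0" using LIMSEQ_unique[OF tendsto_const] by metis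
  with \<open>\<phi> (lat_pt (- k1)) = 1\<close> show False by simp
qed

end

subsection \<open>The characteristic Markov chain\<close>

definition window :: "nat \<Rightarrow> nat \<Rightarrow> (nat \<Rightarrow> 'a) \<Rightarrow> (nat \<Rightarrow> 'a) set" where
  "window m n i = {\<omega>. \<forall>k. m \<le> k \<and> k \<le> n \<longrightarrow> \<omega> k = i k}"

lemma window_cong: "(\<And>k. m \<le> k \<Longrightarrow> k \<le> n \<Longrightarrow> i k = i' k) \<Longrightarrow> window m n i = window m n i'"
  by (simp add: window_def)

lemma window_empty: "n < m \<Longrightarrow> window m n i = UNIV"
  by (auto simp: window_def)

lemma window_cons: "m \<le> n \<Longrightarrow> window m n i = {\<omega>. \<omega> m = i m} \<inter> window (Suc m) n i"
  unfolding window_def by (auto simp: Suc_le_eq) (metis le_neq_implies_less)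

lemma window_single: "window m m i = {\<omega>. \<omega> m = i m}"
  by (simp add: window_cons window_empty)

locale char_chain = mask_scheme a for a :: "int^'s \<Rightarrow> real" +
  fixes l :: "int^'s" and M :: "(nat \<Rightarrow> int^'s) measure"
  assumes law: "char_chain_law a l M"
begin

sublocale prob_space M
  using law by (simp add: char_chain_law_def)

lemma space_M: "space M = UNIV"
proof -
  have "sets M = sets path_space" using law by (simp add: char_chain_law_def)
  then have "space M = space path_space" using sets_eq_imp_space_eq by blast
  then show ?thesis by (simp add: path_space_def space_PiM PiE_UNIV_domain)
qed

lemma measurable_coord[measurable]: "(\<lambda>\<omega>. \<omega> k) \<in> M \<rightarrow>\<^sub>M count_space UNIV"
proof -
  have "sets M = sets path_space" using law by (simp add: char_chain_law_def)
  moreover have "(\<lambda>\<omega>. \<omega> k) \<in> path_space \<rightarrow>\<^sub>M count_space UNIV"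
    unfolding path_space_def by (rule measurable_component_singleton) simp
  ultimately show ?thesis using measurable_cong_sets by blast
qed

lemma measurable_lat_coord[measurable]: "(\<lambda>\<omega>. lat_pt (\<omega> n)) \<in> borel_measurable M"
  by (rule measurable_compose[OF measurable_coord]) simp

lemma pred_sets: "Measurable.pred M P \<Longrightarrow> {\<omega>. P \<omega>} \<in> sets M"
  using space_M by (simp add: pred_def)

lemma window_sets: "window m n i \<in> sets M"
  unfolding window_def by (rule pred_sets) measurable

definition q :: "nat \<Rightarrow> int^'s \<Rightarrow> real" where
  "q n j = measure M {\<omega>. \<omega> n = j}"

lemma q_nonneg: "0 \<le> q n j"
  by (simp add: q_def)

lemma window_0:
  "measure M (window 0 n i) = (if i 0 = l then 1 else 0) * (\<Prod>k<n. a (i k - 2 * i (Suc k)))"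
  using law space_M by (simp add: char_chain_law_def window_def)

lemma q_0: "q 0 j = (if j = l then 1 else 0)"
  using window_0[of 0 "\<lambda>_. j"] by (simp add: q_def window_def)

lemma measure_split_coord:
  assumes "A \<in> sets M" "finite G" "\<And>j. j \<notin> G \<Longrightarrow> measure M (A \<inter> {\<omega>. \<omega> m = j}) = 0"
  shows "measure M A = (\<Sum>j\<in>G. measure M (A \<inter> {\<omega>. \<omega> m = j}))"
proof -
  have "A = (\<Union>j. A \<inter> {\<omega>. \<omega> m = j})" by auto
  also have "measure M \<dots> = (\<Sum>j\<in>G. measure M (A \<inter> {\<omega>. \<omega> m = j}))"
  proof (rule measure_UN_finite_support)
    have "{\<omega>. \<omega> m = j} \<in> sets M" for j by (rule pred_sets) measurable
    then show "A \<inter> {\<omega>. \<omega> m = j} \<in> sets M" for j using assms(1) by blast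
  qed (use assms in \<open>auto simp: disjoint_family_on_def\<close>)
  finally show ?thesis .
qed

lemma window_split:
  assumes IH: "\<And>n i. m \<le> n \<Longrightarrow>
                 measure M (window m n i) = q m (i m) * (\<Prod>k\<in>{m..<n}. a (i k - 2 * i (Suc k)))"
    and n: "Suc m \<le> n"
  shows "measure M (window (Suc m) n i)
         = (\<Sum>j\<in>{j. a (j - 2 * i (Suc m)) \<noteq> 0}. q m j * a (j - 2 * i (Suc m)))
           * (\<Prod>k\<in>{Suc m..<n}. a (i k - 2 * i (Suc k)))"
proof -
  let ?P = "\<Prod>k\<in>{Suc m..<n}. a (i k - 2 * i (Suc k))"
  have piece: "window (Suc m) n i \<inter> {\<omega>. \<omega> m = j} = window m n (i(m := j))" for j
  proof -
    have "window (Suc m) n (i(m := j)) = window (Suc m) n i" by (rule window_cong) simp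
    then show ?thesis using n by (simp add: window_cons[of m n] Int_commute)
  qed
  have piece_measure: "measure M (window m n (i(m := j))) = q m j * a (j - 2 * i (Suc m)) * ?P" for j
  proof -
    have "(\<Prod>k\<in>{m..<n}. a ((i(m:=j)) k - 2 * (i(m:=j)) (Suc k)))
          = a (j - 2 * i (Suc m)) * (\<Prod>k\<in>{Suc m..<n}. a ((i(m:=j)) k - 2 * (i(m:=j)) (Suc k)))"
      using n by (subst prod.atLeast_Suc_lessThan) auto
    also have "(\<Prod>k\<in>{Suc m..<n}. a ((i(m:=j)) k - 2 * (i(m:=j)) (Suc k))) = ?P"
      by (rule prod.cong) auto
    finally show ?thesis using IH[of n "i(m := j)"] n by simp
  qed
  have "measure M (window (Suc m) n i)
        = (\<Sum>j\<in>{j. a (j - 2 * i (Suc m)) \<noteq> 0}. measure M (window (Suc m) n i \<inter> {\<omega>. \<omega> m = j}))"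
    by (rule measure_split_coord) (auto simp: window_sets finite_column piece piece_measure)
  then show ?thesis by (simp add: piece piece_measure sum_distrib_right)
qed

lemma window_measure:
  "m \<le> n \<Longrightarrow> measure M (window m n i) = q m (i m) * (\<Prod>k\<in>{m..<n}. a (i k - 2 * i (Suc k)))"
proof (induction m arbitrary: n i)
  case 0
  then show ?case by (simp add: window_0 q_0 lessThan_atLeast0)
next
  case (Suc m)
  have "q (Suc m) (i (Suc m)) = measure M (window (Suc m) (Suc m) i)"
    by (simp add: q_def window_single)
  also have "\<dots> = (\<Sum>j\<in>{j. a (j - 2 * i (Suc m)) \<noteq> 0}. q m j * a (j - 2 * i (Suc m)))"
    using window_split[OF Suc.IH] by simp
  finally show ?case using window_split[OF Suc.IH Suc.prems] by simp
qed

lemma q_Suc: "q (Suc m) c = (\<Sum>j\<in>{j. a (j - 2 * c) \<noteq> 0}. q m j * a (j - 2 * c))"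
proof -
  have "q (Suc m) c = measure M (window (Suc m) (Suc m) (\<lambda>_. c))"
    by (simp add: q_def window_single)
  then show ?thesis using window_split[OF window_measure, of m "Suc m" "\<lambda>_. c"] by simp
qed

lemma transition_measure: "measure M {\<omega>. \<omega> m = i \<and> \<omega> (Suc m) = j} = q m i * a (i - 2 * j)"
proof -
  have "{\<omega>. \<omega> m = i \<and> \<omega> (Suc m) = j} = window m (Suc m) ((\<lambda>_. j)(m := i))"
    by (simp add: window_cons window_single Collect_conj_eq)
  then show ?thesis using window_measure[of m "Suc m" "(\<lambda>_. j)(m := i)"] by simp
qed

subsubsection \<open>The chain stays in a finite box\<close>

definition radius :: int where
  "radius = (\<Sum>t\<in>UNIV. \<bar>l $ t\<bar>) + (\<Sum>d\<in>{d. a d \<noteq> 0}. \<Sum>t\<in>UNIV. \<bar>d $ t\<bar>)"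

definition box :: "(int^'s) set" where
  "box = {j. \<forall>t. \<bar>j $ t\<bar> \<le> radius}"

lemma start_in_box: "l \<in> box"
proof -
  have "\<bar>l $ t\<bar> \<le> radius" for t
  proof -
    have "\<bar>l $ t\<bar> \<le> (\<Sum>t\<in>UNIV. \<bar>l $ t\<bar>)" by (rule member_le_sum) auto
    also have "\<dots> \<le> radius" unfolding radius_def by (simp add: sum_nonneg)
    finally show ?thesis .
  qed
  then show ?thesis by (simp add: box_def)
qed

lemma support_bound: "a d \<noteq> 0 \<Longrightarrow> \<bar>d $ t\<bar> \<le> radius"
proof -
  assume "a d \<noteq> 0"
  have "\<bar>d $ t\<bar> \<le> (\<Sum>t\<in>UNIV. \<bar>d $ t\<bar>)" by (rule member_le_sum) auto
  also have "\<dots> \<le> (\<Sum>d\<in>{d. a d \<noteq> 0}. \<Sum>t\<in>UNIV. \<bar>d $ t\<bar>)"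
    by (rule member_le_sum[where f="\<lambda>d. \<Sum>t\<in>UNIV. \<bar>d $ t\<bar>"])
       (use \<open>a d \<noteq> 0\<close> finite_mask_support in auto)
  also have "\<dots> \<le> radius" unfolding radius_def by (simp add: sum_nonneg)
  finally show ?thesis .
qed

text \<open>A transition \<open>i \<rightarrow> j\<close> (possible iff \<open>a(i - 2j) \<noteq> 0\<close>) cannot leave the box,
  since \<open>|j| \<le> (|i| + |i - 2j|) / 2\<close> coordinatewise.\<close>
lemma box_step:
  assumes "i \<in> box" "a (i - 2 * j) \<noteq> 0"
  shows "j \<in> box"
proof -
  have "\<bar>j $ t\<bar> \<le> radius" for t
  proof -
    have "\<bar>(i - 2 * j) $ t\<bar> \<le> radius" by (rule support_bound[OF assms(2)])
    moreover have "\<bar>i $ t\<bar> \<le> radius" using assms(1) by (simp add: box_def)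
    ultimately show ?thesis by simp
  qed
  then show ?thesis by (simp add: box_def)
qed

lemma finite_box: "finite box"
proof -
  have "box \<subseteq> vec_lambda ` (PiE UNIV (\<lambda>_. {-radius..radius}))"
  proof
    fix j assume "j \<in> box"
    then have "-radius \<le> j $ t \<and> j $ t \<le> radius" for t
      unfolding box_def by (metis abs_le_D1 abs_le_D2 minus_le_iff mem_Collect_eq)
    then have "vec_nth j \<in> PiE UNIV (\<lambda>_. {-radius..radius})" by auto
    then show "j \<in> vec_lambda ` (PiE UNIV (\<lambda>_. {-radius..radius}))"
      by (metis image_eqI vec_nth_inverse)
  qed
  moreover have "finite (PiE (UNIV::'s set) (\<lambda>_. {-radius..radius}))" by (rule finite_PiE) auto
  ultimately show ?thesis using finite_subset by blast
qed

lemma q_outside_box: "j \<notin> box \<Longrightarrow> q n j = 0"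
proof (induction n arbitrary: j)
  case 0
  then show ?case using start_in_box by (auto simp: q_0)
next
  case (Suc n)
  have "q n i * a (i - 2 * j) = 0" if "a (i - 2 * j) \<noteq> 0" for i
  proof -
    have "i \<notin> box" using box_step[of i j] that Suc.prems by blast
    then show ?thesis using Suc.IH by simp
  qed
  then show ?case by (simp add: q_Suc)
qed

lemma q_Suc_box: "q (Suc n) j = (\<Sum>i\<in>box. q n i * a (i - 2 * j))"
proof -
  let ?G = "{i. a (i - 2 * j) \<noteq> 0}"
  have "q (Suc n) j = (\<Sum>i\<in>?G \<union> box. q n i * a (i - 2 * j))"
    unfolding q_Suc by (rule sum.mono_neutral_left) (auto simp: finite_column finite_box)
  also have "\<dots> = (\<Sum>i\<in>box. q n i * a (i - 2 * j))"
    by (rule sum.mono_neutral_right) (auto simp: finite_column finite_box q_outside_box)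
  finally show ?thesis .
qed

lemma measure_box_split:
  assumes "A \<in> sets M"
  shows "measure M A = (\<Sum>j\<in>box. measure M (A \<inter> {\<omega>. \<omega> n = j}))"
proof (rule measure_split_coord[OF assms finite_box])
  fix j assume "j \<notin> box"
  have "{\<omega>. \<omega> n = j} \<in> sets M" by (rule pred_sets) measurable
  then have "measure M (A \<inter> {\<omega>. \<omega> n = j}) \<le> q n j"
    unfolding q_def by (intro finite_measure_mono) auto
  then show "measure M (A \<inter> {\<omega>. \<omega> n = j}) = 0"
    using q_outside_box[OF \<open>j \<notin> box\<close>, of n] measure_nonneg[of M "A \<inter> {\<omega>. \<omega> n = j}"] by linarith
qed

lemma sum_q: "(\<Sum>j\<in>box. q n j) = 1"
  using measure_box_split[OF sets.top, of n] prob_space by (simp add: q_def space_M)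

lemma nn_integral_coord:
  assumes "\<And>j. 0 \<le> g j"
  shows "(\<integral>\<^sup>+\<omega>. ennreal (g (\<omega> n)) \<partial>M) = ennreal (\<Sum>j\<in>box. q n j * g j)"
proof -
  have "(\<integral>\<^sup>+\<omega>. ennreal (g (\<omega> n)) \<partial>M)
        = (\<integral>\<^sup>+\<omega>. (\<Sum>j\<in>box. ennreal (g j) * indicator {\<omega>. \<omega> n = j} \<omega>) \<partial>M)"
  proof (rule nn_integral_cong_AE)
    have outside_sets: "{\<omega>. \<omega> n \<notin> box} \<in> sets M" by (rule pred_sets) measurable
    have "measure M {\<omega>. \<omega> n \<notin> box} = (\<Sum>j\<in>box. measure M ({\<omega>. \<omega> n \<notin> box} \<inter> {\<omega>. \<omega> n = j}))"
      by (rule measure_box_split[OF outside_sets])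
    also have "\<dots> = 0"
    proof (rule sum.neutral, intro ballI)
      fix j assume "j \<in> box"
      then have "{\<omega>. \<omega> n \<notin> box} \<inter> {\<omega>. \<omega> n = j} = {}" by auto
      then show "measure M ({\<omega>. \<omega> n \<notin> box} \<inter> {\<omega>. \<omega> n = j}) = 0" by simp
    qed
    finally have "{\<omega>. \<omega> n \<notin> box} \<in> null_sets M"
      using outside_sets by (simp add: null_sets_def emeasure_eq_measure)
    then have "AE \<omega> in M. \<omega> n \<in> box" by (rule AE_I') auto
    then show "AE \<omega> in M. ennreal (g (\<omega> n))
                 = (\<Sum>j\<in>box. ennreal (g j) * indicator {\<omega>. \<omega> n = j} \<omega>)"
      by eventually_elim (simp add: indicator_def finite_box if_distrib sum.delta' cong: if_cong)
  qed
  also have "\<dots> = (\<Sum>j\<in>box. ennreal (g j) * emeasure M {\<omega>. \<omega> n = j})"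
    using pred_sets[of "\<lambda>\<omega>. \<omega> n = _"]
    by (subst nn_integral_sum) (auto intro!: sum.cong nn_integral_cmult_indicator)
  also have "\<dots> = ennreal (\<Sum>j\<in>box. q n j * g j)"
    by (simp add: emeasure_eq_measure q_def ennreal_mult'' assms mult.commute q_nonneg flip: sum_ennreal)
  finally show ?thesis .
qed

lemma scheme_at_start: "(lin_scheme a ^^ n) x l = (\<Sum>j\<in>box. q n j * x j)"
proof (induction n arbitrary: x)
  case 0
  have "(\<Sum>j\<in>box. q 0 j * x j) = (\<Sum>j\<in>box. if j = l then x j else 0)"
    by (rule sum.cong) (simp_all add: q_0)
  then show ?case using start_in_box finite_box by simp
next
  case (Suc n)
  have "(lin_scheme a ^^ Suc n) x l = (lin_scheme a ^^ n) (lin_scheme a x) l"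
    by (simp only: funpow_Suc_right comp_def)
  also have "\<dots> = (\<Sum>i\<in>box. q n i * lin_scheme a x i)" by (rule Suc.IH)
  also have "\<dots> = (\<Sum>i\<in>box. \<Sum>j\<in>box. q n i * (a (i - 2 * j) * x j))"
  proof (rule sum.cong[OF refl])
    fix i assume "i \<in> box"
    then have "lin_scheme a x i = (\<Sum>j\<in>box. a (i - 2 * j) * x j)"
      by (intro lin_scheme_eq_sum finite_box) (auto intro: box_step)
    then show "q n i * lin_scheme a x i = (\<Sum>j\<in>box. q n i * (a (i - 2 * j) * x j))"
      by (simp add: sum_distrib_left)
  qed
  also have "\<dots> = (\<Sum>j\<in>box. q (Suc n) j * x j)"
    by (subst sum.swap) (simp add: q_Suc_box sum_distrib_right mult.assoc)
  finally show ?case .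
qed

lemma stay_probability: "measure M {\<omega>. \<omega> n = \<omega> (Suc n)} = (\<Sum>j\<in>box. q n j * a (- j))"
proof -
  have "measure M {\<omega>. \<omega> n = \<omega> (Suc n)} = (\<Sum>j\<in>box. measure M ({\<omega>. \<omega> n = \<omega> (Suc n)} \<inter> {\<omega>. \<omega> n = j}))"
    by (rule measure_box_split) (rule pred_sets, measurable)
  also have "\<dots> = (\<Sum>j\<in>box. q n j * a (- j))"
  proof (rule sum.cong[OF refl])
    fix j :: "int^'s"
    have "{\<omega>. \<omega> n = \<omega> (Suc n)} \<inter> {\<omega>. \<omega> n = j} = {\<omega>. \<omega> n = j \<and> \<omega> (Suc n) = j}" by auto
    moreover have "j - 2 * j = - j" by (simp add: vec_eq_iff)
    ultimately show "measure M ({\<omega>. \<omega> n = \<omega> (Suc n)} \<inter> {\<omega>. \<omega> n = j}) = q n j * a (- j)"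
      by (simp add: transition_measure)
  qed
  finally show ?thesis .
qed

text \<open>If \<open>X\<^sub>n\<close> converges in \<open>L^p\<close>, then jumps become improbable: a jump moves the chain by at
  least \<open>1\<close>, so one of \<open>X\<^sub>n, X\<^sub>n\<^sub>+\<^sub>1\<close> is at distance \<open>\<ge> 1/2\<close> from the limit.\<close>
lemma jump_probability_tendsto_0:
  assumes Y: "Lp_limit M p Y" and p: "0 \<le> p"
  shows "(\<lambda>n. measure M {\<omega>. \<omega> n \<noteq> \<omega> (Suc n)}) \<longlonglongrightarrow> 0"
proof -
  define A where "A n = {\<omega>::nat \<Rightarrow> int^'s. 1/2 \<le> norm (lat_pt (\<omega> n) - Y \<omega>)}" for n
  have Ym[measurable]: "Y \<in> borel_measurable M" using Y by (simp add: Lp_limit_def)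
  have A_sets: "A n \<in> sets M" for n unfolding A_def by (rule pred_sets) measurable
  have A_lim: "(\<lambda>n. emeasure M (A n)) \<longlonglongrightarrow> 0"
    using Lp_tendsto_imp_in_measure[of "\<lambda>n \<omega>. lat_pt (\<omega> n) - Y \<omega>" M "1/2" p] Y p
    by (simp add: A_def space_M Lp_limit_def)
  have lim: "(\<lambda>n. emeasure M (A n) + emeasure M (A (Suc n))) \<longlonglongrightarrow> 0"
    using tendsto_add[OF A_lim LIMSEQ_Suc[OF A_lim]] by simp
  have "{\<omega>. \<omega> n \<noteq> \<omega> (Suc n)} \<subseteq> A n \<union> A (Suc n)" for n
  proof
    fix \<omega> :: "nat \<Rightarrow> int^'s" assume "\<omega> \<in> {\<omega>. \<omega> n \<noteq> \<omega> (Suc n)}"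
    then have "1 \<le> norm ((lat_pt (\<omega> n) - Y \<omega>) - (lat_pt (\<omega> (Suc n)) - Y \<omega>))"
      using lat_pt_dist_ge_1 by simp
    also have "\<dots> \<le> norm (lat_pt (\<omega> n) - Y \<omega>) + norm (lat_pt (\<omega> (Suc n)) - Y \<omega>)"
      by (rule norm_triangle_ineq4)
    finally have "1/2 \<le> norm (lat_pt (\<omega> n) - Y \<omega>) \<or> 1/2 \<le> norm (lat_pt (\<omega> (Suc n)) - Y \<omega>)"
      by linarith
    then show "\<omega> \<in> A n \<union> A (Suc n)" by (simp add: A_def)
  qed
  have bound: "emeasure M {\<omega>. \<omega> n \<noteq> \<omega> (Suc n)} \<le> emeasure M (A n) + emeasure M (A (Suc n))" for n
  proof -
    have "emeasure M {\<omega>. \<omega> n \<noteq> \<omega> (Suc n)} \<le> emeasure M (A n \<union> A (Suc n))"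
      using \<open>{\<omega>. \<omega> n \<noteq> \<omega> (Suc n)} \<subseteq> A n \<union> A (Suc n)\<close> A_sets by (intro emeasure_mono) auto
    also have "\<dots> \<le> emeasure M (A n) + emeasure M (A (Suc n))"
      by (intro emeasure_subadditive A_sets)
    finally show ?thesis .
  qed
  have "(\<lambda>n. emeasure M {\<omega>. \<omega> n \<noteq> \<omega> (Suc n)}) \<longlonglongrightarrow> 0"
    by (intro tendsto_sandwich[OF _ _ tendsto_const lim] always_eventually allI bound) simp
  then have "(\<lambda>n. ennreal (measure M {\<omega>. \<omega> n \<noteq> \<omega> (Suc n)})) \<longlonglongrightarrow> ennreal 0"
    by (simp add: emeasure_eq_measure)
  then show ?thesis by (subst (asm) tendsto_ennreal_iff) auto
qed

end

subsection \<open>The limit distribution\<close>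

locale char_chain_refinable = char_chain a l M + refinable_mask a \<phi>
  for a :: "int^'s \<Rightarrow> real" and l M \<phi>
begin

definition \<mu> :: "int^'s \<Rightarrow> real" where
  "\<mu> j = \<phi> (- lat_pt j)"

text \<open>By duality and shift invariance, \<open>q n j = (S^n \<delta>\<^sub>0)(l - 2^n j) \<rightarrow> \<phi>(-j)\<close>.\<close>
lemma q_tendsto: "(\<lambda>n. q n j) \<longlonglongrightarrow> \<mu> j"
proof -
  have "q n j = (lin_scheme a ^^ n) delta0 ((2^n) *s (- j) + l)" for n
  proof -
    have "q n j = (\<Sum>m\<in>box. q n m * delta0 (m + - j))"
      using finite_box q_outside_box by (auto simp: delta0_def if_distrib sum.delta' cong: if_cong)
    also have "\<dots> = (lin_scheme a ^^ n) (\<lambda>m. delta0 (m + - j)) l"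
      by (rule scheme_at_start[symmetric])
    also have "\<dots> = (lin_scheme a ^^ n) delta0 (l + (2^n) *s (- j))"
      by (simp only: lin_scheme_pow_shift)
    finally show ?thesis by (simp only: add.commute)
  qed
  then show ?thesis
    using scheme_tendsto_refinable[OF rescaled_lattice_tendsto[of "- j" l]]
    by (simp add: \<mu>_def lat_pt_uminus)
qed

lemma \<mu>_nonneg: "0 \<le> \<mu> j"
  by (rule LIMSEQ_le_const[OF q_tendsto]) (simp add: q_nonneg)

lemma \<mu>_outside_box: "j \<notin> box \<Longrightarrow> \<mu> j = 0"
  using LIMSEQ_unique[OF q_tendsto] by (simp add: q_outside_box)

lemma sum_\<mu>: "(\<Sum>j\<in>box. \<mu> j) = 1"
proof -
  have "(\<lambda>n. \<Sum>j\<in>box. q n j) \<longlonglongrightarrow> (\<Sum>j\<in>box. \<mu> j)"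
    by (intro tendsto_sum q_tendsto)
  then have "(\<lambda>n. 1::real) \<longlonglongrightarrow> (\<Sum>j\<in>box. \<mu> j)" by (simp add: sum_q)
  from LIMSEQ_unique[OF tendsto_const this] show ?thesis by simp
qed

lemma interpolatory_iff_point_mass:
  "interpolatory \<phi> \<longleftrightarrow> (\<exists>c. \<forall>j. \<mu> j = (if j = c then 1 else 0))"
proof
  assume "interpolatory \<phi>"
  then obtain k where k: "\<And>j. \<phi> (lat_pt j) = (if k = j then 1 else 0)"
    unfolding interpolatory_def by blast
  have "\<mu> j = (if j = - k then 1 else 0)" for j
    using k[of "- j"] by (auto simp: \<mu>_def lat_pt_uminus)
  then show "\<exists>c. \<forall>j. \<mu> j = (if j = c then 1 else 0)" by blast
next
  assume "\<exists>c. \<forall>j. \<mu> j = (if j = c then 1 else 0)"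
  then obtain c where c: "\<And>j. \<mu> j = (if j = c then 1 else 0)" by blast
  have "\<phi> (lat_pt j) = (if - c = j then 1 else 0)" for j
    using c[of "- j"] by (auto simp: \<mu>_def lat_pt_uminus)
  then show "interpolatory \<phi>" unfolding interpolatory_def by blast
qed

text \<open>If jumps become improbable, \<open>\<Sum>\<^sub>j \<mu> j a(-j) = 1\<close>; as \<open>\<mu>\<close> is a probability vector and
  \<open>a \<le> 1\<close>, the limit distribution is carried by absorbing points, hence is a point mass.\<close>
lemma point_mass_if_jumps_vanish:
  assumes jumps: "(\<lambda>n. measure M {\<omega>. \<omega> n \<noteq> \<omega> (Suc n)}) \<longlonglongrightarrow> 0"
  shows "\<exists>c. \<forall>j. \<mu> j = (if j = c then 1 else 0)"
proof -
  have stay: "1 - measure M {\<omega>. \<omega> n \<noteq> \<omega> (Suc n)} = (\<Sum>j\<in>box. q n j * a (- j))" for n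
  proof -
    have "{\<omega>. \<omega> n \<noteq> \<omega> (Suc n)} = space M - {\<omega>. \<omega> n = \<omega> (Suc n)}" by (auto simp: space_M)
    moreover have "{\<omega>. \<omega> n = \<omega> (Suc n)} \<in> sets M" by (rule pred_sets) measurable
    ultimately show ?thesis by (simp add: prob_compl stay_probability)
  qed
  have "(\<lambda>n. 1 - measure M {\<omega>. \<omega> n \<noteq> \<omega> (Suc n)}) \<longlonglongrightarrow> 1 - 0"
    by (intro tendsto_diff tendsto_const jumps)
  moreover have "(\<lambda>n. \<Sum>j\<in>box. q n j * a (- j)) \<longlonglongrightarrow> (\<Sum>j\<in>box. \<mu> j * a (- j))"
    by (intro tendsto_sum tendsto_mult_right q_tendsto)
  ultimately have "(\<Sum>j\<in>box. \<mu> j * a (- j)) = 1"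
    unfolding stay using LIMSEQ_unique by fastforce
  then have "(\<Sum>j\<in>box. \<mu> j * (1 - a (- j))) = 0"
    using sum_\<mu> by (simp add: algebra_simps sum_subtractf)
  moreover have "0 \<le> \<mu> j * (1 - a (- j))" for j
    using \<mu>_nonneg le_1 by simp
  ultimately have "\<forall>j\<in>box. \<mu> j * (1 - a (- j)) = 0"
    using sum_nonneg_eq_0_iff[OF finite_box, of "\<lambda>j. \<mu> j * (1 - a (- j))"] by simp
  then have absorbing: "a (- j) = 1" if "\<mu> j \<noteq> 0" for j
    using that \<mu>_outside_box by force
  have "\<exists>c\<in>box. \<mu> c \<noteq> 0"
  proof (rule ccontr)
    assume "\<not> (\<exists>c\<in>box. \<mu> c \<noteq> 0)"
    then have "(\<Sum>j\<in>box. \<mu> j) = 0" by simp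
    then show False using sum_\<mu> by simp
  qed
  then obtain c where "c \<in> box" "\<mu> c \<noteq> 0" by blast
  then have others: "\<mu> j = 0" if "j \<noteq> c" for j
    using absorbing_unique absorbing that by blast
  then have "(\<Sum>j\<in>box. \<mu> j) = \<mu> c"
    using \<open>c \<in> box\<close> finite_box by (simp add: sum.remove)
  then have "\<mu> c = 1" using sum_\<mu> by simp
  then show ?thesis using others by metis
qed

lemma Lp_limit_point_mass:
  assumes c: "\<And>j. \<mu> j = (if j = c then 1 else 0)"
  shows "Lp_limit M p (\<lambda>_. lat_pt c)"
  unfolding Lp_limit_def
proof (intro conjI allI)
  show "(\<integral>\<^sup>+\<omega>. ennreal (norm (lat_pt c) powr p) \<partial>M) < \<infinity>"
    by (simp add: emeasure_space_1)
  show "(\<integral>\<^sup>+\<omega>. ennreal (norm (lat_pt (\<omega> n)) powr p) \<partial>M) < \<infinity>" for n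
    using nn_integral_coord[of "\<lambda>j. norm (lat_pt j) powr p" n] by simp
  let ?g = "\<lambda>j. norm (lat_pt j - lat_pt c) powr p"
  have "(\<lambda>n. \<Sum>j\<in>box. q n j * ?g j) \<longlonglongrightarrow> (\<Sum>j\<in>box. \<mu> j * ?g j)"
    by (intro tendsto_sum tendsto_mult_right q_tendsto)
  moreover have "(\<Sum>j\<in>box. \<mu> j * ?g j) = 0"
    by (rule sum.neutral) (simp add: c)
  ultimately have "(\<lambda>n. ennreal (\<Sum>j\<in>box. q n j * ?g j)) \<longlonglongrightarrow> ennreal 0"
    by (intro tendsto_ennrealI) simp
  moreover have "(\<integral>\<^sup>+\<omega>. ennreal (?g (\<omega> n)) \<partial>M) = ennreal (\<Sum>j\<in>box. q n j * ?g j)" for n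
    by (rule nn_integral_coord) simp
  ultimately show "(\<lambda>n. \<integral>\<^sup>+\<omega>. ennreal (norm (lat_pt (\<omega> n) - lat_pt c) powr p) \<partial>M) \<longlonglongrightarrow> 0"
    by simp
qed simp

text \<open>An \<open>L^p\<close> limit of the chain is a.s.\ the point carrying the limit distribution:
  \<open>P(e \<le> |Y - c|) \<le> P(X\<^sub>n \<noteq> c) + P(e \<le> |X\<^sub>n - Y|) \<rightarrow> 0\<close>.\<close>
lemma Lp_limit_AE_point_mass:
  assumes c: "\<And>j. \<mu> j = (if j = c then 1 else 0)"
    and Y: "Lp_limit M p Y" and p: "0 \<le> p"
  shows "AE \<omega> in M. Y \<omega> = lat_pt c"
proof (rule AE_eq_if_far_null)
  show Ym[measurable]: "Y \<in> borel_measurable M" using Y by (simp add: Lp_limit_def)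
  fix e :: real assume e: "0 < e"
  let ?E = "{\<omega>\<in>space M. e \<le> norm (Y \<omega> - lat_pt c)}"
  let ?A = "\<lambda>n. {\<omega>\<in>space M. e \<le> norm (lat_pt (\<omega> n) - Y \<omega>)}"
  let ?B = "\<lambda>n. {\<omega>. \<omega> n \<noteq> c}"
  have B_measure: "emeasure M (?B n) = ennreal (1 - q n c)" for n
  proof -
    have "?B n = space M - {\<omega>. \<omega> n = c}" by (auto simp: space_M)
    moreover have "{\<omega>. \<omega> n = c} \<in> sets M" by (rule pred_sets) measurable
    ultimately show ?thesis by (simp add: emeasure_eq_measure prob_compl q_def)
  qed
  have B_sets: "?B n \<in> sets M" for n by (rule pred_sets) measurable
  have A_sets: "?A n \<in> sets M" for n by measurable
  have bound: "emeasure M ?E \<le> ennreal (1 - q n c) + emeasure M (?A n)" for n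
  proof -
    have "?E \<subseteq> ?B n \<union> ?A n" by (auto simp: norm_minus_commute)
    then have "emeasure M ?E \<le> emeasure M (?B n \<union> ?A n)"
      using A_sets B_sets by (intro emeasure_mono) auto
    also have "\<dots> \<le> emeasure M (?B n) + emeasure M (?A n)"
      by (intro emeasure_subadditive A_sets B_sets)
    finally show ?thesis by (simp only: B_measure)
  qed
  have "(\<lambda>n. ennreal (1 - q n c)) \<longlonglongrightarrow> ennreal (1 - 1)"
    using q_tendsto[of c] c by (intro tendsto_ennrealI tendsto_intros) simp
  moreover have "(\<lambda>n. emeasure M (?A n)) \<longlonglongrightarrow> 0"
    using Lp_tendsto_imp_in_measure[of "\<lambda>n \<omega>. lat_pt (\<omega> n) - Y \<omega>" M e p] Y e p
    by (simp add: Lp_limit_def)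
  ultimately have "(\<lambda>n. ennreal (1 - q n c) + emeasure M (?A n)) \<longlonglongrightarrow> 0"
    using tendsto_add by fastforce
  then have "emeasure M ?E \<le> 0"
    using bound by (intro LIMSEQ_le[OF tendsto_const]) auto
  then show "emeasure M ?E = 0" by simp
qed

end

theorem mainTheorem11:
  fixes a :: "int^'s \<Rightarrow> real" and \<phi> :: "real^'s \<Rightarrow> real"
    and p :: real and l :: "int^'s" and M :: "(nat \<Rightarrow> int^'s) measure"
  assumes "is_mask a" and "scheme_convergent a" and "refinable_fun a \<phi>"
    and "1 \<le> p" and "char_chain_law a l M"
  shows "(Lp_convergent M p \<longleftrightarrow> interpolatory \<phi>) \<and>
         (\<forall>Y. Lp_limit M p Y \<longrightarrow> (\<exists>c::int^'s. AE \<omega> in M. Y \<omega> = lat_pt c))"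
proof -
  interpret char_chain_refinable a l M \<phi>
    using assms(1,3,5) by unfold_locales
  have p: "0 \<le> p" using assms(4) by simp
  have limit: "interpolatory \<phi> \<and> (\<exists>c. AE \<omega> in M. Y \<omega> = lat_pt c)" if Y: "Lp_limit M p Y" for Y
  proof -
    obtain c where c: "\<And>j. \<mu> j = (if j = c then 1 else 0)"
      using point_mass_if_jumps_vanish[OF jump_probability_tendsto_0[OF Y p]] by blast
    then show ?thesis
      using interpolatory_iff_point_mass Lp_limit_AE_point_mass[OF c Y p] by blast
  qed
  have "interpolatory \<phi> \<Longrightarrow> Lp_convergent M p"
    using Lp_limit_point_mass interpolatory_iff_point_mass unfolding Lp_convergent_def by blast
  then show ?thesis
    using limit unfolding Lp_convergent_def by blast
qed

end
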